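(* Let $D\in\mathbb{Z}_{\le0}$ and let $d\ge1$ be an integer coprime to $D$. Then for every $s\in\mathbb{Z}^n$ with $D\equiv\frac12qS^{-1}[s]\pmod{qd}$, the vector $$\xi=\left(\frac{\frac12qS^{-1}[s]-D}{qd},\ S^{-1}s,\ d\right)^t\in\mathbb{Q}^{n+2}$$ belongs to $L_0\!\left[-\frac Dq,\frac12\mathbb{Z}\right]$, i.e. $\phi_0[\xi]=-\frac Dq$ and $\{\phi_0(\xi,y):y\in\mathbb{Z}^{n+2}\}=\frac12\mathbb{Z}$.
   Context: $S$ is an even positive definite symmetric integral $n\times n$ matrix ($n\ge1$), $A[B]=B^tAB$, and $q$ is the least positive integer with $\frac12qS^{-1}[r]\in\mathbb{Z}$ for all $r\in\mathbb{Z}^n$. $S_0=\begin{pmatrix}0&0&1\\0&-S&0\\1&0&0\end{pmatrix}$, $\phi_0(x,y)=\frac12x^tS_0y$ on $V_0=\mathbb{Q}^{n+2}$, $\phi_0[x]=\phi_0(x,x)$, $L_0=\mathbb{Z}^{n+2}$. For $c\in\mathbb{Q}^\times$ and a fractional ideal $\mathfrak b$ of $\mathbb{Q}$, $L_0[c,\mathfrak b]=\{x\in V_0:\phi_0[x]=c,\ \phi_0(x,L_0)=\mathfrak b\}$, where $\phi_0(x,L_0)$ is the set (a fractional ideal) $\{\phi_0(x,y):y\in L_0\}$. *)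

theory Defs
  imports "Jordan_Normal_Form.Matrix" "HOL-Number_Theory.Cong"
begin

definition qf :: "'a::comm_ring_1 mat \<Rightarrow> 'a vec \<Rightarrow> 'a" where
  "qf A x = x \<bullet> (A *\<^sub>v x)"

definition Sinv :: "int mat \<Rightarrow> rat mat" where
  "Sinv S = (THE T. T \<in> carrier_mat (dim_row S) (dim_row S) \<and>
                    map_mat rat_of_int S * T = 1\<^sub>m (dim_row S))"

definition even_pos_def :: "nat \<Rightarrow> int mat \<Rightarrow> bool" where
  "even_pos_def n S \<longleftrightarrow> S \<in> carrier_mat n n \<and> transpose_mat S = S \<and>
     (\<forall>i<n. even (S $$ (i,i))) \<and>
     (\<forall>x :: real vec. x \<in> carrier_vec n \<and> x \<noteq> 0\<^sub>v n \<longrightarrow> qf (map_mat real_of_int S) x > 0)"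

definition level :: "int mat \<Rightarrow> nat" where
  "level S = (LEAST q::nat. q > 0 \<and>
     (\<forall>r :: int vec. r \<in> carrier_vec (dim_row S) \<longrightarrow>
        (1/2) * of_nat q * qf (Sinv S) (map_vec rat_of_int r) \<in> \<int>))"

text \<open>S_0 = ((0,0,1),(0,-S,0),(1,0,0)), an (n+2)x(n+2) matrix.\<close>
definition S0 :: "int mat \<Rightarrow> int mat" where
  "S0 S = (let n = dim_row S in
     mat (n+2) (n+2) (\<lambda>(i,j).
       if (i = 0 \<and> j = n+1) \<or> (i = n+1 \<and> j = 0) then 1
       else if 1 \<le> i \<and> i \<le> n \<and> 1 \<le> j \<and> j \<le> n then - S $$ (i-1, j-1)
       else 0))"

definition phi0 :: "int mat \<Rightarrow> rat vec \<Rightarrow> rat vec \<Rightarrow> rat" where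
  "phi0 S x y = (1/2) * (x \<bullet> (map_mat rat_of_int (S0 S) *\<^sub>v y))"

text \<open>L_0[c, b] = {x in Q^{n+2}. phi0[x] = c, phi0(x, L_0) = b}, L_0 = Z^{n+2}.\<close>
definition L0 :: "int mat \<Rightarrow> rat \<Rightarrow> rat set \<Rightarrow> rat vec set" where
  "L0 S c b = {x. x \<in> carrier_vec (dim_row S + 2) \<and> phi0 S x x = c \<and>
      {phi0 S x (map_vec rat_of_int y) | y :: int vec. y \<in> carrier_vec (dim_row S + 2)} = b}"

definition half_Z :: "rat set" where
  "half_Z = {of_int k / 2 | k :: int. True}"

end

theory Submission
  imports Defs "Jordan_Normal_Form.Determinant"
begin

(* Put Q = q S^{-1}[s]/2, an integer by the definition of the level q. The congruence
   D = Q (mod qd) makes the first coordinate a = (Q - D)/(qd) of xi integral. In the block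
   decomposition Q^{n+2} = Q + Q^n + Q one has 2 phi0(x,y) = x_0 y_{n+1} + x_{n+1} y_0 - S[x',y'],
   hence phi0[xi] = ad - S^{-1}[s]/2 = -D/q, and for integral y, 2 phi0(xi,y) = u.y with the
   integral vector u = S0 xi = (d, -s, a). A common divisor g of d and the entries of s satisfies
   g^2 | Q and g | qda, hence g | D, so g is a unit because d and D are coprime. By Bezout u.y
   then takes the value 1, and phi0(xi, Z^{n+2}) = Z/2. *)

lemma Gcd_image_lessThan_linear_combination:
  fixes f :: "nat \<Rightarrow> int"
  shows "\<exists>c. (\<Sum>i<m. c i * f i) = Gcd (f ` {..<m})"
proof (induction m)
  case 0
  show ?case by simp
next
  case (Suc m)
  then obtain c where c: "(\<Sum>i<m. c i * f i) = Gcd (f ` {..<m})" by blast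
  obtain u v where uv: "u * f m + v * Gcd (f ` {..<m}) = gcd (f m) (Gcd (f ` {..<m}))"
    using bezout_int by blast
  have "(\<Sum>i<Suc m. (if i = m then u else v * c i) * f i) = u * f m + v * (\<Sum>i<m. c i * f i)"
    by (simp add: sum_distrib_left mult.assoc)
  also have "\<dots> = Gcd (f ` {..<Suc m})"
    using c uv by (simp add: lessThan_Suc)
  finally show ?case
    by (rule exI[of _ "\<lambda>i. if i = m then u else v * c i"])
qed

lemma scalar_prod_eq_1_if_coprime_entries:
  fixes u :: "int vec"
  assumes u: "u \<in> carrier_vec m" and coprime: "\<And>g. \<forall>i<m. g dvd u $ i \<Longrightarrow> is_unit g"
  shows "\<exists>y \<in> carrier_vec m. u \<bullet> y = 1"
proof -
  let ?G = "Gcd ((\<lambda>i. u $ i) ` {..<m})"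
  obtain c where c: "(\<Sum>i<m. c i * u $ i) = ?G"
    using Gcd_image_lessThan_linear_combination by blast
  have "is_unit ?G"
    by (rule coprime) auto
  then have "?G = 1"
    by (simp add: zdvd1_eq)
  moreover have "u \<bullet> vec m c = (\<Sum>i<m. c i * u $ i)"
    using u by (simp add: scalar_prod_def lessThan_atLeast0 mult.commute)
  ultimately show ?thesis
    using c by (intro bexI[of _ "vec m c"]) auto
qed

lemma half_scalar_prod_range_eq_half_Z:
  fixes u :: "int vec"
  assumes u: "u \<in> carrier_vec m" and coprime: "\<And>g. \<forall>i<m. g dvd u $ i \<Longrightarrow> is_unit g"
  shows "{rat_of_int (u \<bullet> y) / 2 | y. y \<in> carrier_vec m} = half_Z"
proof
  show "{rat_of_int (u \<bullet> y) / 2 | y. y \<in> carrier_vec m} \<subseteq> half_Z"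
    unfolding half_Z_def by blast
  show "half_Z \<subseteq> {rat_of_int (u \<bullet> y) / 2 | y. y \<in> carrier_vec m}"
  proof
    fix x assume "x \<in> half_Z"
    then obtain k where x: "x = of_int k / 2"
      unfolding half_Z_def by blast
    obtain y where y: "y \<in> carrier_vec m" "u \<bullet> y = 1"
      using scalar_prod_eq_1_if_coprime_entries[OF u coprime] by blast
    have "u \<bullet> (k \<cdot>\<^sub>v y) = k"
      using u y by simp
    with y(1) show "x \<in> {rat_of_int (u \<bullet> y) / 2 | y. y \<in> carrier_vec m}"
      unfolding x by (intro CollectI exI[of _ "k \<cdot>\<^sub>v y"]) auto
  qed
qed

lemma even_pos_def_carrier: "even_pos_def n S \<Longrightarrow> S \<in> carrier_mat n n"
  unfolding even_pos_def_def by blast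

lemma even_pos_def_det_nonzero:
  assumes "even_pos_def n S"
  shows "det S \<noteq> 0"
proof
  assume det0: "det S = 0"
  let ?R = "map_mat real_of_int S"
  have R: "?R \<in> carrier_mat n n"
    using even_pos_def_carrier[OF assms] by simp
  have "det ?R = real_of_int (det S)"
    by (rule of_int_hom.hom_det)
  with det0 have "det ?R = 0"
    by simp
  then obtain v where v: "v \<in> carrier_vec n" "v \<noteq> 0\<^sub>v n" "?R *\<^sub>v v = 0\<^sub>v n"
    using det_0_iff_vec_prod_zero_field[OF R] by auto
  have "qf ?R v > 0"
    using assms v unfolding even_pos_def_def by auto
  moreover have "qf ?R v = 0"
    unfolding qf_def v(3) using v(1) by simp
  ultimately show False by simp
qed

lemma Sinv_right_inverse:
  assumes S: "S \<in> carrier_mat n n" and det: "det S \<noteq> 0"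
  shows "Sinv S \<in> carrier_mat n n" and "map_mat rat_of_int S * Sinv S = 1\<^sub>m n"
proof -
  let ?R = "map_mat rat_of_int S"
  have R: "?R \<in> carrier_mat n n"
    using S by simp
  have "det ?R = rat_of_int (det S)"
    by (rule of_int_hom.hom_det)
  with det have "det ?R \<noteq> 0"
    by simp
  from det_non_zero_imp_unit[OF R this, of "()"]
  obtain B where B: "B \<in> carrier_mat n n" "?R * B = 1\<^sub>m n"
    unfolding Units_def ring_mat_simps by blast
  have unique: "T = B" if T: "T \<in> carrier_mat n n" "?R * T = 1\<^sub>m n" for T
  proof -
    have "T = T * (?R * B)"
      using B T by simp
    also have "\<dots> = (T * ?R) * B"
      using B T R by (simp add: assoc_mult_mat)
    also have "\<dots> = B"
      using mat_mult_left_right_inverse[OF R T] B by simp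
    finally show ?thesis .
  qed
  have "dim_row S = n"
    using S by simp
  then have "Sinv S = B"
    unfolding Sinv_def using B unique by (intro the_equality) blast+
  with B show "Sinv S \<in> carrier_mat n n" "?R * Sinv S = 1\<^sub>m n"
    by auto
qed

lemma even_pos_def_Sinv:
  assumes "even_pos_def n S"
  shows "Sinv S \<in> carrier_mat n n" and "map_mat rat_of_int S * Sinv S = 1\<^sub>m n"
  using Sinv_right_inverse[OF even_pos_def_carrier[OF assms] even_pos_def_det_nonzero[OF assms]]
  by blast+

lemma rat_mat_common_denominator:
  fixes T :: "rat mat"
  shows "\<exists>N::int. N > 0 \<and> (\<forall>i<dim_row T. \<forall>j<dim_col T. of_int N * T $$ (i,j) \<in> \<int>)"
proof -
  define den where "den x = snd (quotient_of x)" for x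
  have den: "den x > 0 \<and> of_int (den x) * x \<in> \<int>" for x
  proof -
    obtain a b where ab: "quotient_of x = (a, b)"
      by fastforce
    then have "b > 0" "x = of_int a / of_int b"
      using quotient_of_denom_pos quotient_of_div by blast+
    with ab show ?thesis
      unfolding den_def by simp
  qed
  define I where "I = {..<dim_row T} \<times> {..<dim_col T}"
  define N where "N = (\<Prod>p\<in>I. den (T $$ p))"
  have "finite I"
    unfolding I_def by simp
  have "of_int N * T $$ p \<in> \<int>" if p: "p \<in> I" for p
  proof -
    have "N = den (T $$ p) * (\<Prod>p'\<in>I - {p}. den (T $$ p'))"
      unfolding N_def using prod.remove[OF \<open>finite I\<close> p] .
    then have "of_int N * T $$ p = (of_int (den (T $$ p)) * T $$ p) * of_int (\<Prod>p'\<in>I - {p}. den (T $$ p'))"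
      by (simp add: algebra_simps)
    also have "\<dots> \<in> \<int>"
      by (rule Ints_mult[OF conjunct2[OF den] Ints_of_int])
    finally show ?thesis .
  qed
  moreover have "N > 0"
    unfolding N_def using den by (simp add: prod_pos)
  ultimately show ?thesis
    unfolding I_def by blast
qed

lemma qf_of_int_vec_Ints:
  assumes T: "T \<in> carrier_mat n n" and r: "r \<in> carrier_vec n"
    and N: "\<forall>i<n. \<forall>j<n. of_int N * T $$ (i,j) \<in> \<int>"
  shows "of_int N * qf T (map_vec rat_of_int r) \<in> \<int>"
proof -
  let ?r = "map_vec rat_of_int r"
  have "of_int N * qf T ?r = (\<Sum>i<n. \<Sum>j<n. ?r $ i * (of_int N * T $$ (i,j)) * ?r $ j)"
    using T r unfolding qf_def
    by (simp add: scalar_prod_def lessThan_atLeast0 sum_distrib_left algebra_simps)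
  also have "\<dots> \<in> \<int>"
  proof (intro Ints_sum)
    fix i j assume "i \<in> {..<n}" "j \<in> {..<n}"
    then have "?r $ i \<in> \<int>" "?r $ j \<in> \<int>" "of_int N * T $$ (i,j) \<in> \<int>"
      using r N by auto
    then show "?r $ i * (of_int N * T $$ (i,j)) * ?r $ j \<in> \<int>"
      by (metis Ints_mult)
  qed
  finally show ?thesis .
qed

lemma level_qf_Ints:
  assumes T: "Sinv S \<in> carrier_mat n n" and n: "dim_row S = n"
  shows "level S > 0"
    and "r \<in> carrier_vec n \<Longrightarrow> (1/2) * of_nat (level S) * qf (Sinv S) (map_vec rat_of_int r) \<in> \<int>"
proof -
  define P where "P q \<longleftrightarrow> q > 0 \<and> (\<forall>r :: int vec. r \<in> carrier_vec (dim_row S) \<longrightarrow>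
     (1/2) * of_nat q * qf (Sinv S) (map_vec rat_of_int r) \<in> \<int>)" for q
  obtain N where N: "N > 0" "\<forall>i<n. \<forall>j<n. of_int N * Sinv S $$ (i,j) \<in> \<int>"
    using rat_mat_common_denominator[of "Sinv S"] T by auto
  have "P (2 * nat N)"
    unfolding P_def n
  proof (intro conjI allI impI)
    fix r :: "int vec" assume "r \<in> carrier_vec n"
    then have "of_int N * qf (Sinv S) (map_vec rat_of_int r) \<in> \<int>"
      using qf_of_int_vec_Ints[OF T _ N(2)] by blast
    then show "(1/2) * of_nat (2 * nat N) * qf (Sinv S) (map_vec rat_of_int r) \<in> \<int>"
      using N(1) by simp
  qed (use N(1) in simp)
  then have "P (level S)"
    unfolding level_def P_def[symmetric] by (rule LeastI)
  then show "level S > 0" and "r \<in> carrier_vec n \<Longrightarrow>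
      (1/2) * of_nat (level S) * qf (Sinv S) (map_vec rat_of_int r) \<in> \<int>"
    unfolding P_def n by auto
qed

lemma qf_smult:
  fixes A :: "'a::field mat"
  assumes "A \<in> carrier_mat n n" and "x \<in> carrier_vec n"
  shows "qf A (c \<cdot>\<^sub>v x) = c^2 * qf A x"
  using assms unfolding qf_def by (simp add: mult_mat_vec[OF assms] power2_eq_square)

lemma level_qf_square_dvd:
  assumes S: "even_pos_def n S" and s: "s \<in> carrier_vec n" and g: "\<forall>i<n. g dvd s $ i"
    and Q: "(1/2) * of_nat (level S) * qf (Sinv S) (map_vec rat_of_int s) = of_int Q"
  shows "g^2 dvd Q"
proof -
  have n: "dim_row S = n"
    using even_pos_def_carrier[OF S] by simp
  note T = even_pos_def_Sinv(1)[OF S]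
  define s' where "s' = vec n (\<lambda>i. s $ i div g)"
  have s': "s' \<in> carrier_vec n"
    unfolding s'_def by simp
  have "map_vec rat_of_int s = of_int g \<cdot>\<^sub>v map_vec rat_of_int s'"
    using s g by (auto simp: s'_def simp flip: of_int_mult)
  then have "of_int Q = of_int g ^ 2 * ((1/2) * of_nat (level S) * qf (Sinv S) (map_vec rat_of_int s'))"
    unfolding Q[symmetric] using T s' by (simp add: qf_smult)
  moreover obtain Q' where "(1/2) * of_nat (level S) * qf (Sinv S) (map_vec rat_of_int s') = of_int Q'"
    using level_qf_Ints(2)[OF T n s'] by (elim Ints_cases)
  ultimately have "Q = g^2 * Q'"
    by (metis of_int_eq_iff of_int_mult of_int_power)
  then show ?thesis
    by simp
qed

definition vec_middle :: "nat \<Rightarrow> 'a vec \<Rightarrow> 'a vec" where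
  "vec_middle n x = vec n (\<lambda>k. x $ (k+1))"

definition block_vec :: "nat \<Rightarrow> 'a \<Rightarrow> 'a vec \<Rightarrow> 'a \<Rightarrow> 'a vec" where
  "block_vec n a v b = vec (n+2) (\<lambda>i. if i = 0 then a else if i = n+1 then b else v $ (i-1))"

lemma vec_middle_carrier [simp]: "vec_middle n x \<in> carrier_vec n"
  by (simp add: vec_middle_def)

lemma vec_middle_map_vec:
  "x \<in> carrier_vec (n+2) \<Longrightarrow> vec_middle n (map_vec f x) = map_vec f (vec_middle n x)"
  by (auto simp: vec_middle_def)

lemma block_vec_carrier [simp]: "block_vec n a v b \<in> carrier_vec (n+2)"
  by (simp add: block_vec_def)

lemma block_vec_first [simp]: "block_vec n a v b $ 0 = a"
  by (simp add: block_vec_def)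

lemma block_vec_last [simp]: "block_vec n a v b $ Suc n = b"
  by (simp add: block_vec_def)

lemma vec_middle_block_vec [simp]:
  "v \<in> carrier_vec n \<Longrightarrow> vec_middle n (block_vec n a v b) = v"
  by (auto simp: vec_middle_def block_vec_def)

lemma sum_lessThan_split_ends:
  fixes f :: "nat \<Rightarrow> 'a::comm_monoid_add"
  shows "(\<Sum>i<n+2. f i) = f 0 + (\<Sum>k<n. f (k+1)) + f (n+1)"
proof -
  have "(\<Sum>i<Suc (Suc n). f i) = f 0 + (\<Sum>k<Suc n. f (Suc k))"
    by (rule sum.lessThan_Suc_shift)
  then show ?thesis
    by (simp add: add.assoc)
qed

lemma scalar_prod_split_ends:
  assumes "x \<in> carrier_vec (n+2)" and "y \<in> carrier_vec (n+2)"
  shows "x \<bullet> y = x $ 0 * y $ 0 + vec_middle n x \<bullet> vec_middle n y + x $ (n+1) * y $ (n+1)"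
proof -
  have "x \<bullet> y = (\<Sum>i<n+2. x $ i * y $ i)"
    using assms(2) by (simp add: scalar_prod_def lessThan_atLeast0)
  also have "\<dots> = x $ 0 * y $ 0 + (\<Sum>k<n. x $ (k+1) * y $ (k+1)) + x $ (n+1) * y $ (n+1)"
    by (rule sum_lessThan_split_ends)
  also have "(\<Sum>k<n. x $ (k+1) * y $ (k+1)) = vec_middle n x \<bullet> vec_middle n y"
    by (simp add: scalar_prod_def vec_middle_def lessThan_atLeast0)
  finally show ?thesis .
qed

lemma S0_mult_vec:
  assumes S: "S \<in> carrier_mat n n" and y: "y \<in> carrier_vec (n+2)"
  shows "map_mat rat_of_int (S0 S) *\<^sub>v y
    = block_vec n (y $ (n+1)) (- (map_mat rat_of_int S *\<^sub>v vec_middle n y)) (y $ 0)"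
proof (rule eq_vecI)
  have dims: "dim_row S = n" "dim_col S = n"
    using S by auto
  fix i assume "i < dim_vec (block_vec n (y $ (n+1)) (- (map_mat rat_of_int S *\<^sub>v vec_middle n y)) (y $ 0))"
  then have i: "i < n+2"
    by (simp add: block_vec_def)
  have row: "(map_mat rat_of_int (S0 S) *\<^sub>v y) $ i = (\<Sum>j<n+2. rat_of_int (S0 S $$ (i,j)) * y $ j)"
    using i y by (simp add: S0_def Let_def dims scalar_prod_def lessThan_atLeast0)
  consider "i = 0" | "i = n+1" | k where "k < n" "i = k+1"
    using i by (cases i) (auto simp: less_Suc_eq)
  then show "(map_mat rat_of_int (S0 S) *\<^sub>v y) $ i
    = block_vec n (y $ (n+1)) (- (map_mat rat_of_int S *\<^sub>v vec_middle n y)) (y $ 0) $ i"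
    unfolding row sum_lessThan_split_ends
    by cases (simp_all add: S0_def Let_def dims block_vec_def vec_middle_def scalar_prod_def
        lessThan_atLeast0 sum_negf)
qed (use S in \<open>simp add: S0_def Let_def block_vec_def\<close>)

lemma phi0_eq:
  assumes S: "S \<in> carrier_mat n n" and x: "x \<in> carrier_vec (n+2)" and y: "y \<in> carrier_vec (n+2)"
  shows "phi0 S x y = (x $ 0 * y $ (n+1) + x $ (n+1) * y $ 0
    - vec_middle n x \<bullet> (map_mat rat_of_int S *\<^sub>v vec_middle n y)) / 2"
  using S unfolding phi0_def S0_mult_vec[OF S y] scalar_prod_split_ends[OF x block_vec_carrier]
  by simp

lemma phi0_block_vec_Sinv:
  assumes S: "even_pos_def n S" and s: "s \<in> carrier_vec n" and y: "y \<in> carrier_vec (n+2)"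
  shows "phi0 S (block_vec n a (Sinv S *\<^sub>v s) b) y = (a * y $ (n+1) + b * y $ 0 - s \<bullet> vec_middle n y) / 2"
proof -
  let ?R = "map_mat rat_of_int S" and ?T = "Sinv S"
  have Sc: "S \<in> carrier_mat n n" and sym: "transpose_mat S = S"
    using S unfolding even_pos_def_def by auto
  then have R: "?R \<in> carrier_mat n n" and Rt: "transpose_mat ?R = ?R"
    by (simp_all add: map_mat_transpose)
  note T = even_pos_def_Sinv[OF S]
  have Ts: "?T *\<^sub>v s \<in> carrier_vec n"
    using T s by simp
  have "(?T *\<^sub>v s) \<bullet> (?R *\<^sub>v vec_middle n y) = (transpose_mat ?R *\<^sub>v (?T *\<^sub>v s)) \<bullet> vec_middle n y"
    using transpose_vec_mult_scalar[OF R vec_middle_carrier Ts] by simp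
  also have "transpose_mat ?R *\<^sub>v (?T *\<^sub>v s) = s"
    unfolding Rt using R T s by (simp flip: assoc_mult_mat_vec)
  finally show ?thesis
    using phi0_eq[OF Sc block_vec_carrier y] Ts by simp
qed

lemma phi0_block_vec_Sinv_self:
  fixes a b :: rat
  assumes S: "even_pos_def n S" and s: "s \<in> carrier_vec n"
  defines "X \<equiv> block_vec n a (Sinv S *\<^sub>v s) b"
  shows "phi0 S X X = a * b - qf (Sinv S) s / 2"
proof -
  have "Sinv S *\<^sub>v s \<in> carrier_vec n"
    using even_pos_def_Sinv(1)[OF S] s by simp
  then show ?thesis
    unfolding X_def phi0_block_vec_Sinv[OF S s block_vec_carrier] qf_def
    by (simp add: field_simps)
qed

lemma phi0_block_vec_Sinv_of_int:
  assumes S: "even_pos_def n S" and s: "s \<in> carrier_vec n" and y: "y \<in> carrier_vec (n+2)"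
  shows "phi0 S (block_vec n (of_int a) (Sinv S *\<^sub>v map_vec rat_of_int s) (of_int b)) (map_vec rat_of_int y)
    = of_int (block_vec n b (- s) a \<bullet> y) / 2"
proof -
  have "map_vec rat_of_int s \<bullet> map_vec rat_of_int (vec_middle n y) = of_int (s \<bullet> vec_middle n y)"
    using s by (auto simp: scalar_prod_def vec_middle_def intro!: sum.cong)
  moreover have "- s \<bullet> vec_middle n y = - (s \<bullet> vec_middle n y)"
    using s by (intro scalar_prod_uminus_left) (simp add: vec_middle_def)
  ultimately show ?thesis
    unfolding phi0_block_vec_Sinv[OF S map_carrier_vec[THEN iffD2, OF s] map_carrier_vec[THEN iffD2, OF y]]
      scalar_prod_split_ends[OF block_vec_carrier y]
    using s y by (simp add: vec_middle_map_vec algebra_simps)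
qed

lemma phi0_range_eq_half_Z:
  assumes S: "even_pos_def n S" and s: "s \<in> carrier_vec n"
    and coprime: "\<And>g. g dvd b \<Longrightarrow> \<forall>i<n. g dvd s $ i \<Longrightarrow> is_unit g"
  shows "{phi0 S (block_vec n (of_int a) (Sinv S *\<^sub>v map_vec rat_of_int s) (of_int b)) (map_vec rat_of_int y)
      | y. y \<in> carrier_vec (n+2)} = half_Z"
proof -
  let ?u = "block_vec n b (- s) a"
  have "is_unit g" if g: "\<forall>i<n+2. g dvd ?u $ i" for g
  proof (rule coprime)
    show "g dvd b"
      using g[rule_format, of 0] by simp
    show "\<forall>i<n. g dvd s $ i"
    proof (intro allI impI)
      fix i assume "i < n"
      then show "g dvd s $ i"
        using g[rule_format, of "Suc i"] s by (simp add: block_vec_def)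
    qed
  qed
  then have "{rat_of_int (?u \<bullet> y) / 2 | y. y \<in> carrier_vec (n+2)} = half_Z"
    by (intro half_scalar_prod_range_eq_half_Z[OF block_vec_carrier]) auto
  moreover have "{phi0 S (block_vec n (of_int a) (Sinv S *\<^sub>v map_vec rat_of_int s) (of_int b))
      (map_vec rat_of_int y) | y. y \<in> carrier_vec (n+2)}
    = {rat_of_int (?u \<bullet> y) / 2 | y. y \<in> carrier_vec (n+2)}"
    using phi0_block_vec_Sinv_of_int[OF S s] by (intro Collect_cong) metis
  ultimately show ?thesis
    by simp
qed

lemma Sinv_block_vec_in_L0:
  assumes S: "even_pos_def n S" and s: "s \<in> carrier_vec n"
    and Q: "(1/2) * of_nat (level S) * qf (Sinv S) (map_vec rat_of_int s) = of_int Q"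
    and a: "Q - D = int (level S) * d * a" and coprime: "coprime d D"
  shows "block_vec n (of_int a) (Sinv S *\<^sub>v map_vec rat_of_int s) (of_int d)
    \<in> L0 S (- of_int D / of_nat (level S)) half_Z"
    (is "?X \<in> _")
proof -
  have n: "dim_row S = n"
    using even_pos_def_carrier[OF S] by simp
  note level = level_qf_Ints[OF even_pos_def_Sinv(1)[OF S] n]
  have "phi0 S ?X ?X = of_int a * of_int d - qf (Sinv S) (map_vec rat_of_int s) / 2"
    using s by (simp add: phi0_block_vec_Sinv_self[OF S])
  also have "\<dots> = - of_int D / of_nat (level S)"
    using Q arg_cong[OF a, of rat_of_int] level(1) by (simp add: field_simps)
  finally have "phi0 S ?X ?X = - of_int D / of_nat (level S)" .
  moreover have "{phi0 S ?X (map_vec rat_of_int y) | y. y \<in> carrier_vec (n+2)} = half_Z"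
  proof (rule phi0_range_eq_half_Z[OF S s])
    fix g assume g: "g dvd d" "\<forall>i<n. g dvd s $ i"
    have "g dvd Q"
      using level_qf_square_dvd[OF S s g(2) Q] by (simp add: power2_eq_square dvd_mult_left)
    moreover have "D = Q - int (level S) * d * a"
      using a by simp
    ultimately have "g dvd D"
      using dvd_diff dvd_mult2[OF dvd_mult[OF g(1)]] by metis
    then show "is_unit g"
      by (rule coprime_common_divisor[OF coprime g(1)])
  qed
  moreover have "?X \<in> carrier_vec (n+2)"
    by (rule block_vec_carrier)
  ultimately show ?thesis
    unfolding L0_def n by simp
qed

theorem lemma6p7:
  fixes n :: nat and S :: "int mat" and D :: int and d :: int and s :: "int vec"
  assumes "n \<ge> 1" and "even_pos_def n S"
    and "D \<le> 0" and "d \<ge> 1" and "coprime d D"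
    and "s \<in> carrier_vec n"
    and "[D = \<lfloor>(1/2) * of_nat (level S) * qf (Sinv S) (map_vec rat_of_int s)\<rfloor>]
           (mod (int (level S) * d))"
  shows "vec (n+2) (\<lambda>i.
           if i = 0 then ((1/2) * of_nat (level S) * qf (Sinv S) (map_vec rat_of_int s) - of_int D)
                         / (of_nat (level S) * of_int d)
           else if i = n+1 then of_int d
           else (Sinv S *\<^sub>v map_vec rat_of_int s) $ (i-1))
         \<in> L0 S (- of_int D / of_nat (level S)) half_Z"
proof -
  let ?q = "level S" and ?s = "map_vec rat_of_int s"
  have n: "dim_row S = n"
    using even_pos_def_carrier[OF assms(2)] by simp
  note level = level_qf_Ints[OF even_pos_def_Sinv(1)[OF assms(2)] n]
  obtain Q where Q: "(1/2) * of_nat ?q * qf (Sinv S) ?s = of_int Q"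
    using level(2)[OF assms(6)] by (elim Ints_cases)
  have "[Q = D] (mod int ?q * d)"
    using assms(7) unfolding Q floor_of_int by (rule cong_sym)
  then obtain a where a: "Q - D = int ?q * d * a"
    by (auto simp: cong_iff_dvd_diff elim: dvdE)
  have first: "(of_int Q - of_int D) / (of_nat ?q * of_int d) = (of_int a :: rat)"
    using arg_cong[OF a, of rat_of_int] level(1) assms(4) by simp
  show ?thesis
    using Sinv_block_vec_in_L0[OF assms(2,6) Q a assms(5)]
    unfolding block_vec_def Q first .
qed

end
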